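(* Let $n\ge1$, let \[P^n=\Big\{x\in[0,4]^n:\sum_{i\in S}x_i+\sum_{i\notin S}(4-x_i)\ge\tfrac12\ \ \forall S\subseteq\{1,\dots,n\}\Big\},\] and let $\mathcal{B}=(B^{o}(4),\dots,B^{o}(4))$ ($n$ copies), where \[B^{o}(u)=\Big\{(x,z)\in\mathbb{R}\times[0,1]^u: x=uz_u+\sum_{j=1}^{u-1}z_j,\ 0\le z_{u-1}\le\dots\le z_1\le1,\ z_1+z_u\le1\Big\}.\] Let $P^n_{\mathcal{B}}=\{(x,z)\in\mathbb{R}^n\times\mathbb{R}^{4n}: x\in P^n,\ (x_i,z_i)\in B^o(4)\text{ for } i=1,\dots,n\}$, with all variables $x$ and $z$ integer. Then there exists a complete branch-and-bound tree with respect to $P^n_{\mathcal{B}}$ having $2^n+n$ leaf nodes.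
   Context: Branch-and-bound (B&B) trees: for a polyhedron $Q$ and its set of integer points $Q^{\mathrm{int}}$ (points of $Q$ whose integer-designated coordinates are integral), a B&B tree is a rooted binary tree whose nodes are labeled by polyhedra: the root is labeled by a box (polyhedron) containing $Q$, and each non-leaf node labeled $D'$ has exactly two children labeled $D'\cap\{y:y_i\le t\}$ and $D'\cap\{y:y_i\ge t+1\}$ for some integer-designated variable $y_i$ and some $t\in\mathbb{Z}$. The tree is complete with respect to $Q$ if $\mathrm{conv}(Q^{\mathrm{int}})=\mathrm{conv}\big(\bigcup_{N\text{ leaf}}(N\cap Q)\big)$. The size of the tree is its number of leaf nodes. *)

theory Defs
  imports "HOL-Analysis.Analysis" "HOL-Library.Numeral_Type"
begin

datatype 'i bbtree = Leaf | Branch 'i int "'i bbtree" "'i bbtree"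

fun bb_leaves :: "(real^'i) set \<Rightarrow> 'i bbtree \<Rightarrow> (real^'i) set list" where
  "bb_leaves D Leaf = [D]"
| "bb_leaves D (Branch i t l r) =
     bb_leaves (D \<inter> {y. y $ i \<le> of_int t}) l @ bb_leaves (D \<inter> {y. of_int t + 1 \<le> y $ i}) r"

definition bb_size :: "(real^'i) set \<Rightarrow> 'i bbtree \<Rightarrow> nat" where
  "bb_size D T = length (bb_leaves D T)"

definition int_points :: "(real^'i) set \<Rightarrow> (real^'i) set" where
  "int_points Q = {y \<in> Q. \<forall>k. y $ k \<in> \<int>}"

definition complete_bb_tree :: "(real^'i) set \<Rightarrow> (real^'i) set \<Rightarrow> 'i bbtree \<Rightarrow> bool" where
  "complete_bb_tree Q D T \<longleftrightarrow>
     (\<exists>l u. D = cbox l u) \<and> Q \<subseteq> D \<and>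
     convex hull (int_points Q) = convex hull (\<Union>N\<in>set (bb_leaves D T). N \<inter> Q)"

text \<open>P^n: indices 'n (n = CARD('n)).\<close>
definition Pn :: "(real^'n::finite) set" where
  "Pn = {x. (\<forall>i. 0 \<le> x $ i \<and> x $ i \<le> 4) \<and>
            (\<forall>S. (\<Sum>i\<in>S. x $ i) + (\<Sum>i\<in>-S. 4 - x $ i) \<ge> 1/2)}"

text \<open>B^o(4): z_1..z_4 are z 0, z 1, z 2, z 3.\<close>
definition Bo4 :: "real \<Rightarrow> (4 \<Rightarrow> real) \<Rightarrow> bool" where
  "Bo4 x z \<longleftrightarrow> (\<forall>j. 0 \<le> z j \<and> z j \<le> 1) \<and>
     x = 4 * z 3 + z 0 + z 1 + z 2 \<and>
     0 \<le> z 2 \<and> z 2 \<le> z 1 \<and> z 1 \<le> z 0 \<and> z 0 \<le> 1 \<and> z 0 + z 3 \<le> 1"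

text \<open>P^n_B: coordinates Inl i are x_i, coordinates Inr (i,j) are z_{i,j+1}.\<close>
definition PnB :: "(real^('n::finite + 'n \<times> 4)) set" where
  "PnB = {y. (\<chi> i. y $ Inl i) \<in> Pn \<and> (\<forall>i. Bo4 (y $ Inl i) (\<lambda>j. y $ Inr (i, j)))}"

end

theory Submission
  imports Defs
begin

text \<open>
  The tree branches on z(i,1) \<le> 0 or \<ge> 1 for every block i along one path, which gives n
  leaves, and at the end of that path on z(i,4) \<le> 0 or \<ge> 1 for every i, which gives
  2^n leaves. On the latter leaves all z(i,1) vanish, and then B^o(4) forces
  z(i,2) = z(i,3) = 0 and x(i) = 4 z(i,4), so every point there is integral.
  On the former leaves z(a,1) = 1 for some a, hence 1 \<le> x(a) \<le> 3, and this single coordinate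
  already satisfies every inequality defining P^n. So P^n does not couple the blocks, and
  since B^o(4) is a simplex with the integral vertices (k, v(k)), k = 0, \<dots>, 4, the blocks can
  be replaced one at a time by convex combinations of these vertices.
\<close>

lemma exhaust_4_zero_based: "(j::4) = 0 \<or> j = 1 \<or> j = 2 \<or> j = 3"
  using exhaust_4[of j] by auto

lemma convex_sum_nonzero:
  fixes C :: "'a::real_vector set"
  assumes "finite S" "convex C" "(\<Sum>i\<in>S. a i) = 1" "\<And>i. i \<in> S \<Longrightarrow> 0 \<le> a i"
    and "\<And>i. i \<in> S \<Longrightarrow> a i \<noteq> 0 \<Longrightarrow> y i \<in> C"
  shows "(\<Sum>i\<in>S. a i *\<^sub>R y i) \<in> C"
proof -
  let ?S' = "{i \<in> S. a i \<noteq> 0}"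
  have "(\<Sum>i\<in>?S'. a i *\<^sub>R y i) = (\<Sum>i\<in>S. a i *\<^sub>R y i)"
    "(\<Sum>i\<in>?S'. a i) = (\<Sum>i\<in>S. a i)"
    by (auto intro: sum.mono_neutral_left simp: assms(1))
  moreover have "(\<Sum>i\<in>?S'. a i *\<^sub>R y i) \<in> C"
    using assms \<open>(\<Sum>i\<in>?S'. a i) = (\<Sum>i\<in>S. a i)\<close> by (intro convex_sum) auto
  ultimately show ?thesis by simp
qed

lemma bb_leaves_cover_integral_point:
  assumes "y \<in> D" "\<forall>k. y $ k \<in> \<int>"
  shows "\<exists>N\<in>set (bb_leaves D T). y \<in> N"
  using assms(1)
proof (induction T arbitrary: D)
  case Leaf
  then show ?case by simp
next
  case (Branch i t l r)
  obtain m where m: "y $ i = of_int m"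
    using assms(2) Ints_cases by metis
  show ?case
  proof (cases "m \<le> t")
    case True
    then have "y \<in> D \<inter> {y. y $ i \<le> of_int t}" using m Branch.prems by simp
    from Branch.IH(1)[OF this] show ?thesis by auto
  next
    case False
    then have "y \<in> D \<inter> {y. of_int t + 1 \<le> y $ i}" using m Branch.prems by simp
    from Branch.IH(2)[OF this] show ?thesis by auto
  qed
qed

lemma complete_bb_treeI:
  assumes "Q \<subseteq> cbox l u"
    and "\<And>N y. N \<in> set (bb_leaves (cbox l u) T) \<Longrightarrow> y \<in> N \<inter> Q \<Longrightarrow> y \<in> convex hull (int_points Q)"
  shows "complete_bb_tree Q (cbox l u) T"
proof -
  let ?U = "\<Union>N\<in>set (bb_leaves (cbox l u) T). N \<inter> Q"
  have "int_points Q \<subseteq> ?U"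
    using assms(1) bb_leaves_cover_integral_point[of _ "cbox l u" T]
    unfolding int_points_def by blast
  moreover have "?U \<subseteq> convex hull (int_points Q)"
    using assms(2) by blast
  ultimately have "convex hull (int_points Q) = convex hull ?U"
    by (metis convex_convex_hull hull_minimal hull_mono subset_antisym)
  then show ?thesis
    unfolding complete_bb_tree_def using assms(1) by blast
qed

text \<open>\<open>Bo4_vertex k\<close> is the z-part v(k) of the vertex of B^o(4) with x = k, and
  \<open>Bo4_weight z\<close> are the barycentric coordinates of z with respect to v(0), \<dots>, v(4).\<close>

definition Bo4_vertex :: "nat \<Rightarrow> 4 \<Rightarrow> real" where
  "Bo4_vertex k j =
     (if j = 3 then (if k = 4 then 1 else 0)
      else if j = 0 then (if 1 \<le> k \<and> k \<le> 3 then 1 else 0)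
      else if j = 1 then (if 2 \<le> k \<and> k \<le> 3 then 1 else 0)
      else (if k = 3 then 1 else 0))"

definition Bo4_weight :: "(4 \<Rightarrow> real) \<Rightarrow> nat \<Rightarrow> real" where
  "Bo4_weight z k =
     (if k = 0 then 1 - z 0 - z 3
      else if k = 1 then z 0 - z 1
      else if k = 2 then z 1 - z 2
      else if k = 3 then z 2
      else z 3)"

lemma atMost_4_nat: "{..4::nat} = {0, 1, 2, 3, 4}"
  by auto

lemma Bo4_Bo4_vertex:
  assumes "k \<le> 4"
  shows "Bo4 (real k) (Bo4_vertex k)"
proof -
  have "k \<in> {0, 1, 2, 3, 4}" using assms by auto
  then show ?thesis
    unfolding Bo4_def Bo4_vertex_def forall_4 by auto
qed

lemma Bo4_weight_nonneg: "Bo4 x z \<Longrightarrow> 0 \<le> Bo4_weight z k"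
  unfolding Bo4_def Bo4_weight_def by auto

lemma sum_Bo4_weight: "(\<Sum>k\<le>4. Bo4_weight z k) = 1"
  by (simp add: atMost_4_nat Bo4_weight_def)

lemma Bo4_vertex_combination:
  assumes "Bo4 x z"
  shows "x = (\<Sum>k\<le>4. Bo4_weight z k * real k)"
    and "z j = (\<Sum>k\<le>4. Bo4_weight z k * Bo4_vertex k j)"
proof -
  show "x = (\<Sum>k\<le>4. Bo4_weight z k * real k)"
    using assms unfolding Bo4_def by (simp add: atMost_4_nat Bo4_weight_def)
  show "z j = (\<Sum>k\<le>4. Bo4_weight z k * Bo4_vertex k j)"
    using exhaust_4_zero_based[of j]
    by (elim disjE) (simp_all add: atMost_4_nat Bo4_weight_def Bo4_vertex_def)
qed

lemma Bo4_weight_nonzero_imp_middle_vertex: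
  assumes "Bo4 x z" "z 0 = 1" "Bo4_weight z k \<noteq> 0"
  shows "1 \<le> k \<and> k \<le> 3"
proof -
  have "0 \<le> z 3" "z 0 + z 3 \<le> 1" using assms(1) unfolding Bo4_def by auto
  then have "z 3 = 0" using assms(2) by linarith
  then show ?thesis using assms(2,3) by (auto simp: Bo4_weight_def split: if_splits)
qed

lemma Bo4_x_between_if_z1: "Bo4 x z \<Longrightarrow> z 0 = 1 \<Longrightarrow> 1 \<le> x \<and> x \<le> 3"
  unfolding Bo4_def by auto

lemma Bo4_integral_if_z1_zero:
  assumes "Bo4 x z" "z 0 \<le> 0" "z 3 \<le> 0 \<or> 1 \<le> z 3"
  shows "x \<in> \<int>" "z j \<in> \<int>"
proof -
  have "0 \<le> z 2" "z 2 \<le> z 1" "z 1 \<le> z 0" "0 \<le> z 3" "z 3 \<le> 1"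
    "x = 4 * z 3 + z 0 + z 1 + z 2"
    using assms(1) unfolding Bo4_def by auto
  then have "z 0 = 0 \<and> z 1 = 0 \<and> z 2 = 0 \<and> (z 3 = 0 \<or> z 3 = 1) \<and> x = 4 * z 3"
    using assms(2,3) by auto
  then show "x \<in> \<int>" "z j \<in> \<int>"
    using exhaust_4_zero_based[of j] by auto
qed

lemma mem_Pn_if_coordinate_between:
  fixes x :: "real^'n::finite"
  assumes "\<forall>i. 0 \<le> x $ i \<and> x $ i \<le> 4" "1 \<le> x $ k" "x $ k \<le> 3"
  shows "x \<in> Pn"
  unfolding Pn_def
proof (intro CollectI conjI allI)
  fix i show "0 \<le> x $ i" "x $ i \<le> 4" using assms by auto
next
  fix S :: "'n set"
  have in_S: "(\<Sum>i\<in>S. x $ i) \<ge> (if k \<in> S then x $ k else 0)"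
    using assms(1) by (auto intro: member_le_sum sum_nonneg)
  have not_in_S: "(\<Sum>i\<in>-S. 4 - x $ i) \<ge> (if k \<in> S then 0 else 4 - x $ k)"
    using assms(1) by (auto intro: member_le_sum sum_nonneg)
  show "1/2 \<le> (\<Sum>i\<in>S. x $ i) + (\<Sum>i\<in>-S. 4 - x $ i)"
    using in_S not_in_S assms(2,3) by (auto split: if_splits)
qed

abbreviation z_block :: "real^('n::finite + 'n \<times> 4) \<Rightarrow> 'n \<Rightarrow> 4 \<Rightarrow> real" where
  "z_block y i \<equiv> \<lambda>j. y $ Inr (i, j)"

fun block_of :: "'n + 'n \<times> 4 \<Rightarrow> 'n" where
  "block_of (Inl i) = i"
| "block_of (Inr (i, j)) = i"

definition replace_block :: "real^('n::finite + 'n \<times> 4) \<Rightarrow> 'n \<Rightarrow> nat \<Rightarrow> real^('n + 'n \<times> 4)" where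
  "replace_block y i k = (\<chi> c.
     if block_of c = i then (case c of Inl _ \<Rightarrow> real k | Inr (_, j) \<Rightarrow> Bo4_vertex k j)
     else y $ c)"

lemma Bo4_PnB: "y \<in> PnB \<Longrightarrow> Bo4 (y $ Inl i) (z_block y i)"
  unfolding PnB_def by auto

lemma PnB_subset_box: "PnB \<subseteq> cbox 0 (\<chi> _. 4)"
proof
  fix y :: "real^('n::finite + 'n \<times> 4)"
  assume y: "y \<in> PnB"
  have "0 \<le> y $ c \<and> y $ c \<le> 4" for c
  proof (cases c)
    case (Inl i)
    then show ?thesis using Bo4_PnB[OF y, of i] unfolding Bo4_def by auto
  next
    case (Inr p)
    then obtain i j where "c = Inr (i, j)" by (cases p) auto
    moreover have "0 \<le> y $ Inr (i, j) \<and> y $ Inr (i, j) \<le> 1"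
      using Bo4_PnB[OF y, of i] unfolding Bo4_def by blast
    ultimately show ?thesis by simp
  qed
  then show "y \<in> cbox 0 (\<chi> _. 4)" by (simp add: mem_box_cart)
qed

lemma PnB_eq_replace_block_combination:
  assumes "y \<in> PnB"
  shows "y = (\<Sum>k\<le>4. Bo4_weight (z_block y i) k *\<^sub>R replace_block y i k)"
proof -
  have B: "Bo4 (y $ Inl i) (z_block y i)" by (rule Bo4_PnB[OF assms])
  have "y $ c = (\<Sum>k\<le>4. Bo4_weight (z_block y i) k * replace_block y i k $ c)" for c
  proof (cases "block_of c = i")
    case True
    then consider "c = Inl i" | j where "c = Inr (i, j)"
      by (cases c) auto
    then show ?thesis
    proof cases
      case 1
      have "replace_block y i k $ c = real k" for k
        using 1 by (simp add: replace_block_def)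
      then show ?thesis
        using 1 Bo4_vertex_combination(1)[OF B] by simp
    next
      case (2 j)
      have "replace_block y i k $ c = Bo4_vertex k j" for k
        using 2 by (simp add: replace_block_def)
      then show ?thesis
        using 2 Bo4_vertex_combination(2)[OF B, of j] by simp
    qed
  next
    case False
    then have "replace_block y i k $ c = y $ c" for k
      by (simp add: replace_block_def)
    then have "(\<Sum>k\<le>4. Bo4_weight (z_block y i) k * replace_block y i k $ c)
        = (\<Sum>k\<le>4. Bo4_weight (z_block y i) k) * y $ c"
      by (simp add: sum_distrib_right)
    also have "\<dots> = y $ c"
      by (simp only: sum_Bo4_weight mult_1)
    finally show ?thesis by (rule sym)
  qed
  then show ?thesis
    unfolding vec_eq_iff sum_component vector_scaleR_component real_scaleR_def by blast
qed

text \<open>Points with z(a,1) = 1 for some a, integral outside the blocks in J. The anchor a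
  keeps x(a) in [1, 3], so replacing another block by a vertex of B^o(4) stays in P^n_B.\<close>

definition anchored_points :: "'n set \<Rightarrow> (real^('n::finite + 'n \<times> 4)) set" where
  "anchored_points J =
     {y \<in> PnB. (\<exists>k. y $ Inr (k, 0) = 1) \<and> (\<forall>c. block_of c \<notin> J \<longrightarrow> y $ c \<in> \<int>)}"

lemma PnB_replace_block:
  assumes y: "y \<in> PnB" and k: "k \<le> 4"
    and anchor: "replace_block y i k $ Inr (a, 0) = 1"
  shows "replace_block y i k \<in> PnB"
proof -
  have B: "Bo4 (replace_block y i k $ Inl j) (z_block (replace_block y i k) j)" for j
  proof (cases "j = i")
    case True
    then show ?thesis using Bo4_Bo4_vertex[OF k] by (simp add: replace_block_def)
  next
    case False
    then show ?thesis using Bo4_PnB[OF y, of j] by (simp add: replace_block_def)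
  qed
  have "0 \<le> replace_block y i k $ Inl j \<and> replace_block y i k $ Inl j \<le> 4" for j
    using B[of j] unfolding Bo4_def by auto
  moreover have "1 \<le> replace_block y i k $ Inl a \<and> replace_block y i k $ Inl a \<le> 3"
    using Bo4_x_between_if_z1[OF B[of a]] anchor by simp
  ultimately have "(\<chi> j. replace_block y i k $ Inl j) \<in> Pn"
    by (intro mem_Pn_if_coordinate_between[where k = a]) simp_all
  with B show ?thesis unfolding PnB_def by blast
qed

lemma replace_block_in_anchored_points:
  assumes y: "y \<in> anchored_points (insert i J)" and k: "k \<le> 4"
    and weight: "Bo4_weight (z_block y i) k \<noteq> 0"
  shows "replace_block y i k \<in> anchored_points J"
proof -
  from y have yP: "y \<in> PnB" and int: "\<And>c. block_of c \<notin> insert i J \<Longrightarrow> y $ c \<in> \<int>"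
    and "\<exists>a. y $ Inr (a, 0) = 1"
    unfolding anchored_points_def by auto
  then obtain a where a: "y $ Inr (a, 0) = 1" by blast
  have anchor: "replace_block y i k $ Inr (a, 0) = 1"
  proof (cases "a = i")
    case True
    then have "1 \<le> k \<and> k \<le> 3"
      using Bo4_weight_nonzero_imp_middle_vertex[OF Bo4_PnB[OF yP, of i] _ weight] a by simp
    then show ?thesis using True by (simp add: replace_block_def Bo4_vertex_def)
  qed (simp add: replace_block_def a)
  have "replace_block y i k $ c \<in> \<int>" if "block_of c \<notin> J" for c
  proof (cases "block_of c = i")
    case True
    then show ?thesis by (cases c) (auto simp: replace_block_def Bo4_vertex_def)
  next
    case False
    then show ?thesis using int[of c] that by (simp add: replace_block_def)
  qed
  with PnB_replace_block[OF yP k anchor] anchor show ?thesis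
    unfolding anchored_points_def by blast
qed

lemma anchored_points_subset_hull:
  assumes "finite J"
  shows "anchored_points J \<subseteq> convex hull (int_points PnB)"
  using assms
proof (induction J rule: finite_induct)
  case empty
  show ?case
    unfolding anchored_points_def int_points_def by (auto intro: hull_inc)
next
  case (insert i J)
  show ?case
  proof
    fix y assume y: "y \<in> anchored_points (insert i J)"
    then have yP: "y \<in> PnB" unfolding anchored_points_def by simp
    have "(\<Sum>k\<le>4. Bo4_weight (z_block y i) k *\<^sub>R replace_block y i k)
        \<in> convex hull (int_points PnB)"
    proof (rule convex_sum_nonzero)
      show "0 \<le> Bo4_weight (z_block y i) k" for k
        by (rule Bo4_weight_nonneg[OF Bo4_PnB[OF yP]])
      show "replace_block y i k \<in> convex hull (int_points PnB)"
        if "k \<in> {..4}" "Bo4_weight (z_block y i) k \<noteq> 0" for k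
        using replace_block_in_anchored_points[OF y _ that(2)] that(1) insert.IH by auto
    qed (simp_all add: sum_Bo4_weight)
    then show "y \<in> convex hull (int_points PnB)"
      using PnB_eq_replace_block_combination[OF yP] by simp
  qed
qed

lemma int_points_PnB_if_z1_zero:
  assumes y: "y \<in> PnB"
    and "\<And>i. y $ Inr (i, 0) \<le> 0 \<and> (y $ Inr (i, 3) \<le> 0 \<or> 1 \<le> y $ Inr (i, 3))"
  shows "y \<in> int_points PnB"
proof -
  have "y $ c \<in> \<int>" for c
  proof (cases c)
    case (Inl i)
    then show ?thesis using Bo4_integral_if_z1_zero(1)[OF Bo4_PnB[OF y, of i]] assms(2) by simp
  next
    case (Inr p)
    then obtain i j where "c = Inr (i, j)" by (cases p) auto
    then show ?thesis using Bo4_integral_if_z1_zero(2)[OF Bo4_PnB[OF y, of i]] assms(2) by simp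
  qed
  with y show ?thesis unfolding int_points_def by blast
qed

fun z4_split_tree :: "'n list \<Rightarrow> ('n + 'n \<times> 4) bbtree" where
  "z4_split_tree [] = Leaf"
| "z4_split_tree (i # xs) = Branch (Inr (i, 3)) 0 (z4_split_tree xs) (z4_split_tree xs)"

fun z1_chain_tree :: "'n list \<Rightarrow> 'n list \<Rightarrow> ('n + 'n \<times> 4) bbtree" where
  "z1_chain_tree [] ys = z4_split_tree ys"
| "z1_chain_tree (i # xs) ys = Branch (Inr (i, 0)) 0 (z1_chain_tree xs ys) Leaf"

lemma length_bb_leaves_z4_split_tree:
  "length (bb_leaves D (z4_split_tree xs)) = 2 ^ length xs"
  by (induction xs arbitrary: D) auto

lemma length_bb_leaves_z1_chain_tree:
  "length (bb_leaves D (z1_chain_tree xs ys)) = length xs + 2 ^ length ys"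
  by (induction xs arbitrary: D) (auto simp: length_bb_leaves_z4_split_tree)

lemma bb_leaves_z4_split_tree:
  "N \<in> set (bb_leaves D (z4_split_tree ys)) \<Longrightarrow>
     N \<subseteq> D \<inter> {y. \<forall>i\<in>set ys. y $ Inr (i, 3) \<le> 0 \<or> 1 \<le> y $ Inr (i, 3)}"
  by (induction ys arbitrary: D) (auto dest!: subsetD)

lemma bb_leaves_z1_chain_tree:
  "N \<in> set (bb_leaves D (z1_chain_tree xs ys)) \<Longrightarrow>
     N \<subseteq> D \<inter> ({y. \<exists>a. 1 \<le> y $ Inr (a, 0)} \<union>
       {y. (\<forall>i\<in>set xs. y $ Inr (i, 0) \<le> 0) \<and> (\<forall>i\<in>set ys. y $ Inr (i, 3) \<le> 0 \<or> 1 \<le> y $ Inr (i, 3))})"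
proof (induction xs arbitrary: D)
  case Nil
  then show ?case using bb_leaves_z4_split_tree by fastforce
next
  case (Cons a xs)
  from Cons.prems show ?case by (auto dest!: Cons.IH)
qed

lemma PnB_leaf_point_in_hull:
  assumes "set xs = UNIV" and N: "N \<in> set (bb_leaves D (z1_chain_tree xs xs))"
    and y: "y \<in> N \<inter> PnB"
  shows "y \<in> convex hull (int_points PnB)"
proof -
  from bb_leaves_z1_chain_tree[OF N] y assms(1)
  consider a where "1 \<le> y $ Inr (a, 0)"
    | "\<And>i. y $ Inr (i, 0) \<le> 0 \<and> (y $ Inr (i, 3) \<le> 0 \<or> 1 \<le> y $ Inr (i, 3))"
    by blast
  then show ?thesis
  proof cases
    case (1 a)
    moreover have "y $ Inr (a, 0) \<le> 1"
      using Bo4_PnB[of y a] y unfolding Bo4_def by auto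
    ultimately have "y \<in> anchored_points UNIV"
      using y unfolding anchored_points_def by force
    then show ?thesis using anchored_points_subset_hull[of UNIV] by auto
  next
    case 2
    with y have "y \<in> int_points PnB" by (intro int_points_PnB_if_z1_zero) auto
    then show ?thesis by (rule hull_inc)
  qed
qed

theorem proposition6:
  shows "\<exists>D (T :: ('n::finite + 'n \<times> 4) bbtree).
           complete_bb_tree (PnB :: (real^('n + 'n \<times> 4)) set) D T \<and>
           bb_size D T = 2 ^ CARD('n) + CARD('n)"
proof -
  obtain xs :: "'n list" where xs: "set xs = UNIV" "distinct xs"
    using finite_distinct_list[of "UNIV :: 'n set"] by auto
  let ?D = "cbox 0 (\<chi> _. 4) :: (real^('n + 'n \<times> 4)) set"
  let ?T = "z1_chain_tree xs xs"
  have "complete_bb_tree PnB ?D ?T"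
    using PnB_subset_box PnB_leaf_point_in_hull[OF xs(1)] by (rule complete_bb_treeI)
  moreover have "bb_size ?D ?T = 2 ^ CARD('n) + CARD('n)"
    using distinct_card[OF xs(2)] xs(1)
    by (simp add: bb_size_def length_bb_leaves_z1_chain_tree)
  ultimately show ?thesis by blast
qed

end
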